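(* Let $r>0$ and $p,q\in\mathbb{R}$, and for integers $n\ge2$ let $$S_{r,p,q}^{(n)}=\sum_{k=1}^{n-1}(n^r-k^r)^p\,k^q.$$ Then, as $n\to\infty$, $S_{r,p,q}^{(n)}$ is of the same order (bounded above and below by positive constant multiples) as $$\begin{cases} n^{rp+q+1}, & \min\{p,q\}>-1,\\ n^{rp+q+1}(1+\ln n), & \min\{p,q\}=-1,\\ n^{\max\{rp,\,(r-1)p+q\}}, & \min\{p,q\}<-1.\end{cases}$$ *)

theory Defs
  imports Complex_Main "HOL-Library.Landau_Symbols"
begin

definition S_sum :: "real \<Rightarrow> real \<Rightarrow> real \<Rightarrow> nat \<Rightarrow> real" where
  "S_sum r p q n = (\<Sum>k=1..n-1. (real n powr r - real k powr r) powr p * real k powr q)"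

definition S_rate :: "real \<Rightarrow> real \<Rightarrow> real \<Rightarrow> nat \<Rightarrow> real" where
  "S_rate r p q n =
     (if min p q > -1 then real n powr (r*p + q + 1)
      else if min p q = -1 then real n powr (r*p + q + 1) * (1 + ln (real n))
      else real n powr (max (r*p) ((r-1)*p + q)))"

end

theory Submission
  imports Defs "HOL-Analysis.Harmonic_Numbers"
begin

(* Split the sum at k = n/2. For k <= n/2 the factor (n^r - k^r)^p lies within constant factors
   of n^(rp), so this half is of order n^(rp) * sum_{k <= n/2} k^q. For k = n - j with j < n/2 the
   mean value theorem gives n^r - k^r = r z^(r-1) j with n/2 < z < n, so the other half is of order
   n^((r-1)p+q) * sum_{j < n/2} j^p. A power sum sum_{k <= m} k^a grows like m^(a+1), 1 + ln m or 1
   according as a > -1, a = -1 or a < -1 (telescoping the mean value theorem for t^(a+1), resp.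
   harmonic numbers). Both terms then have the common exponent rp + q + 1 when their power sums
   diverge, and comparing them yields the three cases. *)

section \<open>Orders of growth of nonnegative functions\<close>

lemma bigo_add_nonneg:
  fixes f g :: "'a \<Rightarrow> real"
  assumes "eventually (\<lambda>x. 0 \<le> f x \<and> 0 \<le> g x) F"
  shows "f \<in> O[F](\<lambda>x. f x + g x)" "g \<in> O[F](\<lambda>x. f x + g x)"
  by (rule bigoI[where c = 1]; use assms in \<open>auto elim!: eventually_mono\<close>)+

lemma bigtheta_add_nonneg:
  fixes f1 f2 g1 g2 :: "'a \<Rightarrow> real"
  assumes f1: "f1 \<in> \<Theta>[F](g1)" and f2: "f2 \<in> \<Theta>[F](g2)"
    and nonneg: "eventually (\<lambda>x. 0 \<le> f1 x \<and> 0 \<le> f2 x \<and> 0 \<le> g1 x \<and> 0 \<le> g2 x) F"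
  shows "(\<lambda>x. f1 x + f2 x) \<in> \<Theta>[F](\<lambda>x. g1 x + g2 x)"
proof
  have "eventually (\<lambda>x. 0 \<le> g1 x \<and> 0 \<le> g2 x) F"
    using nonneg by (rule eventually_mono) simp
  note g = bigo_add_nonneg[OF this]
  show "(\<lambda>x. f1 x + f2 x) \<in> O[F](\<lambda>x. g1 x + g2 x)"
    using landau_o.big_trans[OF bigthetaD1[OF f1] g(1)] landau_o.big_trans[OF bigthetaD1[OF f2] g(2)]
    by (rule sum_in_bigo)
  have "eventually (\<lambda>x. 0 \<le> f1 x \<and> 0 \<le> f2 x) F"
    using nonneg by (rule eventually_mono) simp
  note f = bigo_add_nonneg[OF this]
  have "g1 \<in> O[F](f1)" "g2 \<in> O[F](f2)"
    using bigthetaD1[OF bigtheta_sym[THEN iffD1, OF f1]] bigthetaD1[OF bigtheta_sym[THEN iffD1, OF f2]]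
    by auto
  then show "(\<lambda>x. f1 x + f2 x) \<in> \<Omega>[F](\<lambda>x. g1 x + g2 x)"
    unfolding bigomega_iff_bigo
    using landau_o.big_trans[OF _ f(1)] landau_o.big_trans[OF _ f(2)] by (intro sum_in_bigo)
qed

lemma sum_bigtheta_termwise:
  fixes f g :: "'a \<Rightarrow> 'b \<Rightarrow> real"
  assumes "0 < c" "0 < C"
    and "eventually (\<lambda>x. \<forall>k\<in>A x. 0 \<le> g x k \<and> c * g x k \<le> f x k \<and> f x k \<le> C * g x k) F"
  shows "(\<lambda>x. \<Sum>k\<in>A x. f x k) \<in> \<Theta>[F](\<lambda>x. \<Sum>k\<in>A x. g x k)"
proof (rule bigthetaI'[OF assms(1,2)])
  show "eventually (\<lambda>x. c * norm (\<Sum>k\<in>A x. g x k) \<le> norm (\<Sum>k\<in>A x. f x k)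
      \<and> norm (\<Sum>k\<in>A x. f x k) \<le> C * norm (\<Sum>k\<in>A x. g x k)) F"
    using assms(3)
  proof eventually_elim
    case (elim x)
    have g: "0 \<le> (\<Sum>k\<in>A x. g x k)"
      using elim by (intro sum_nonneg) auto
    have lower: "c * (\<Sum>k\<in>A x. g x k) \<le> (\<Sum>k\<in>A x. f x k)"
      unfolding sum_distrib_left using elim by (intro sum_mono) auto
    have upper: "(\<Sum>k\<in>A x. f x k) \<le> C * (\<Sum>k\<in>A x. g x k)"
      unfolding sum_distrib_left using elim by (intro sum_mono) auto
    have "0 \<le> (\<Sum>k\<in>A x. f x k)"
      using g lower assms(1) by (meson mult_nonneg_nonneg less_imp_le order_trans)
    with g lower upper show ?case
      by simp
  qed
qed

section \<open>Elementary estimates for real powers\<close>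

lemma powr_diff_mvt:
  fixes x y b :: real
  assumes "0 < x" "x < y"
  obtains z where "x < z" "z < y" "y powr b - x powr b = b * z powr (b - 1) * (y - x)"
proof -
  have "\<exists>z. x < z \<and> z < y \<and> y powr b - x powr b = (y - x) * (b * z powr (b - 1))"
    by (rule MVT2[OF assms(2)]) (use assms in \<open>auto intro!: has_real_derivative_powr\<close>)
  with that show ?thesis by (auto simp: mult_ac)
qed

lemma powr_bounds_of_ratio:
  fixes x y c e :: real
  assumes "0 < c" "0 < y" "c * y \<le> x" "x \<le> y"
  shows "c powr \<bar>e\<bar> * y powr e \<le> x powr e \<and> x powr e \<le> c powr - \<bar>e\<bar> * y powr e"
proof -
  define t where "t = x / y"
  have t: "c \<le> t" "t \<le> 1" using assms by (auto simp: t_def field_simps)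
  have x: "x powr e = t powr e * y powr e"
    using assms by (simp add: t_def powr_divide)
  have "c powr \<bar>e\<bar> \<le> t powr e \<and> t powr e \<le> c powr - \<bar>e\<bar>"
  proof (cases "0 \<le> e")
    case True
    have "c powr e \<le> t powr e" "t powr e \<le> 1" "c powr e \<le> 1"
      using assms t True by (auto intro: powr_mono2 powr_le1)
    moreover from \<open>c powr e \<le> 1\<close> have "1 \<le> c powr - e"
      using assms(1) by (simp add: powr_minus_divide le_divide_eq_1)
    ultimately show ?thesis
      using True by simp
  next
    case False
    have "c powr - e \<le> 1" "t powr e \<le> c powr e"
      using assms t False by (auto intro: powr_le1 powr_mono2')
    moreover have "1 \<le> t powr e"
      using powr_mono2'[of e t 1] assms t False by simp
    ultimately show ?thesis
      using False by simp
  qed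
  then show ?thesis
    unfolding x by (auto intro: mult_right_mono)
qed

lemma powr_increment_le:
  fixes x a :: real
  assumes "0 < x" "0 \<le> a \<or> a \<le> -1"
  shows "(x + 1) powr (a + 1) - x powr (a + 1) \<le> (a + 1) * (x + 1) powr a"
proof -
  obtain z where z: "x < z" "z < x + 1"
    and eq: "(x + 1) powr (a + 1) - x powr (a + 1) = (a + 1) * z powr a"
    using powr_diff_mvt[OF assms(1), of "x + 1" "a + 1"] by auto
  show ?thesis
    using assms(2)
  proof
    assume "0 \<le> a"
    then have "z powr a \<le> (x + 1) powr a"
      using z assms(1) by (intro powr_mono2) auto
    then show ?thesis
      unfolding eq using \<open>0 \<le> a\<close> by (intro mult_left_mono) auto
  next
    assume "a \<le> -1"
    then have "(x + 1) powr a \<le> z powr a"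
      using z assms(1) by (intro powr_mono2') auto
    then show ?thesis
      unfolding eq using \<open>a \<le> -1\<close> by (intro mult_left_mono_neg) auto
  qed
qed

lemma powr_increment_ge:
  fixes x a :: real
  assumes "0 < x" "-1 \<le> a" "a \<le> 0"
  shows "(a + 1) * (x + 1) powr a \<le> (x + 1) powr (a + 1) - x powr (a + 1)"
proof -
  obtain z where z: "x < z" "z < x + 1"
    and eq: "(x + 1) powr (a + 1) - x powr (a + 1) = (a + 1) * z powr a"
    using powr_diff_mvt[OF assms(1), of "x + 1" "a + 1"] by auto
  have "(x + 1) powr a \<le> z powr a"
    using z assms by (intro powr_mono2') auto
  then show ?thesis
    unfolding eq using assms(2) by (intro mult_left_mono) auto
qed

lemma one_plus_ln_le_powr:
  fixes x e :: real
  assumes "0 < e" "1 \<le> x"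
  shows "1 + ln x \<le> (1 + 1 / e) * x powr e"
proof -
  have "ln x \<le> x powr e / e" "1 \<le> x powr e"
    using assms by (auto intro: ln_powr_bound ge_one_powr_ge_zero)
  then have "1 + ln x \<le> x powr e + x powr e / e"
    by linarith
  also have "\<dots> = (1 + 1 / e) * x powr e"
    using assms(1) by (simp add: field_simps)
  finally show ?thesis .
qed

lemma eventually_ln_ge: "eventually (\<lambda>n. c \<le> ln (real n)) at_top"
  using filterlim_compose[OF ln_at_top filterlim_real_sequentially]
  by (simp add: filterlim_at_top)

section \<open>Power sums\<close>

definition power_sum :: "real \<Rightarrow> nat \<Rightarrow> real" where
  "power_sum a m = (\<Sum>k=1..m. real k powr a)"

definition power_sum_order :: "real \<Rightarrow> nat \<Rightarrow> real" where
  "power_sum_order a m =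
     (if a > -1 then real m powr (a + 1) else if a = -1 then 1 + ln (real m) else 1)"

lemma power_sum_Suc: "power_sum a (Suc m) = power_sum a m + real (Suc m) powr a"
  by (simp add: power_sum_def)

lemma power_sum_nonneg: "0 \<le> power_sum a m"
  unfolding power_sum_def by (intro sum_nonneg) auto

lemma power_sum_ge_one: "1 \<le> m \<Longrightarrow> 1 \<le> power_sum a m"
proof (induction m rule: dec_induct)
  case (step m)
  then show ?case
    by (simp add: power_sum_Suc add_increasing2)
qed (simp add: power_sum_def)

lemma power_sum_order_ge_one: "1 \<le> n \<Longrightarrow> 1 \<le> power_sum_order a n"
  by (simp add: power_sum_order_def ge_one_powr_ge_zero)

lemma power_sum_order_nonneg: "1 \<le> n \<Longrightarrow> 0 \<le> power_sum_order a n"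
  using power_sum_order_ge_one[of n a] by simp

lemma power_sum_minus_one: "power_sum (-1) m = harm m"
  unfolding power_sum_def harm_def by (intro sum.cong) (auto simp: powr_minus_divide divide_inverse)

lemma power_sum_le_powr: "0 \<le> a \<Longrightarrow> power_sum a m \<le> real m powr (a + 1)"
proof -
  assume "0 \<le> a"
  then have "power_sum a m \<le> (\<Sum>k=1..m. real m powr a)"
    unfolding power_sum_def by (intro sum_mono powr_mono2) auto
  then show ?thesis
    by (cases "m = 0") (auto simp: powr_add mult.commute)
qed

lemma powr_le_power_sum: "a \<le> 0 \<Longrightarrow> real m powr (a + 1) \<le> power_sum a m"
proof -
  assume "a \<le> 0"
  then have "(\<Sum>k=1..m. real m powr a) \<le> power_sum a m"
    unfolding power_sum_def by (intro sum_mono powr_mono2') auto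
  then show ?thesis
    by (cases "m = 0") (auto simp: powr_add mult.commute)
qed

lemma powr_le_power_sum_convex:
  assumes "0 \<le> a"
  shows "real m powr (a + 1) \<le> (a + 1) * power_sum a m"
proof (induction m)
  case (Suc m)
  have "real (Suc m) powr (a + 1) - real m powr (a + 1) \<le> (a + 1) * real (Suc m) powr a"
    using assms powr_increment_le[of "real m" a] by (cases "m = 0") (auto simp: add.commute)
  with Suc show ?case
    by (simp add: power_sum_Suc distrib_left)
qed (simp add: power_sum_def)

lemma power_sum_le_powr_concave:
  assumes "-1 \<le> a" "a \<le> 0"
  shows "(a + 1) * power_sum a m \<le> real m powr (a + 1)"
proof (induction m)
  case (Suc m)
  have "(a + 1) * real (Suc m) powr a \<le> real (Suc m) powr (a + 1) - real m powr (a + 1)"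
    using assms powr_increment_ge[of "real m" a] by (cases "m = 0") (auto simp: add.commute)
  with Suc show ?case
    by (simp add: power_sum_Suc distrib_left)
qed (simp add: power_sum_def)

lemma power_sum_bounded:
  assumes "a < -1"
  shows "power_sum a m \<le> a / (a + 1)"
proof (cases "m = 0")
  case True
  with assms show ?thesis
    by (simp add: power_sum_def zero_le_divide_iff)
next
  case False
  then have "1 \<le> m" by simp
  then have "-(a + 1) * power_sum a m + real m powr (a + 1) \<le> -a"
  proof (induction m rule: dec_induct[of 1])
    case (step m)
    have "real (Suc m) powr (a + 1) - real m powr (a + 1) \<le> (a + 1) * real (Suc m) powr a"
      using assms step powr_increment_le[of "real m" a] by (auto simp: add.commute)
    with step show ?case
      by (simp add: power_sum_Suc algebra_simps)
  qed (simp_all add: power_sum_def)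
  then have "-(a + 1) * power_sum a m \<le> -a"
    using powr_ge_zero[of "real m" "a + 1"] by linarith
  with assms show ?thesis
    by (simp add: field_simps)
qed

lemma harm_le_one_plus_ln: "1 \<le> m \<Longrightarrow> harm m \<le> 1 + ln (real m)"
  using euler_mascheroni_sequence_decreasing[of 1 m] by (simp add: harm_def)

theorem power_sum_bigtheta: "power_sum a \<in> \<Theta>(power_sum_order a)"
proof -
  consider "0 \<le> a" | "-1 < a" "a < 0" | "a = -1" | "a < -1"
    by linarith
  then show ?thesis
  proof cases
    case 1
    have "eventually (\<lambda>m. 1 / (a + 1) * power_sum_order a m \<le> power_sum a m
        \<and> power_sum a m \<le> 1 * power_sum_order a m) at_top"
      using 1 powr_le_power_sum_convex[OF 1] power_sum_le_powr[OF 1]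
      by (auto simp: power_sum_order_def field_simps)
    then show ?thesis
      using 1 by (intro bigthetaI'[of "1 / (a + 1)" 1])
        (auto simp: power_sum_order_def power_sum_nonneg elim!: eventually_mono)
  next
    case 2
    have "eventually (\<lambda>m. 1 * power_sum_order a m \<le> power_sum a m
        \<and> power_sum a m \<le> 1 / (a + 1) * power_sum_order a m) at_top"
      using 2 power_sum_le_powr_concave[of a] powr_le_power_sum[of a]
      by (auto simp: power_sum_order_def field_simps)
    then show ?thesis
      using 2 by (intro bigthetaI'[of 1 "1 / (a + 1)"])
        (auto simp: power_sum_order_def power_sum_nonneg elim!: eventually_mono)
  next
    case 3
    have bounds: "1 / 2 * (1 + ln (real m)) \<le> harm m \<and> harm m \<le> 1 + ln (real m)"
      if "1 \<le> m" for m
    proof -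
      have "1 \<le> (harm m :: real)"
        using power_sum_ge_one[OF that, of "-1"] by (simp add: power_sum_minus_one)
      moreover have "ln (real m) \<le> (harm m :: real)"
        using that ln_le_harm[of m] by (auto intro: order_trans[rotated])
      ultimately
      show ?thesis
        using harm_le_one_plus_ln[OF that] by simp
    qed
    have "eventually (\<lambda>m. 1 / 2 * norm (power_sum_order a m) \<le> norm (power_sum a m)
        \<and> norm (power_sum a m) \<le> 1 * norm (power_sum_order a m)) at_top"
      using eventually_ge_at_top[of "1::nat"]
      by eventually_elim (use 3 bounds in \<open>auto simp: power_sum_order_def power_sum_minus_one\<close>)
    then show ?thesis
      by (rule bigthetaI'[rotated 2]) simp_all
  next
    case 4
    have "eventually (\<lambda>m. 1 * norm (power_sum_order a m) \<le> norm (power_sum a m)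
        \<and> norm (power_sum a m) \<le> a / (a + 1) * norm (power_sum_order a m)) at_top"
      using eventually_ge_at_top[of "1::nat"]
      by eventually_elim
        (use 4 in \<open>simp add: power_sum_order_def abs_of_nonneg[OF power_sum_nonneg]
          power_sum_ge_one power_sum_bounded\<close>)
    then show ?thesis
      by (rule bigthetaI'[rotated 2]) (use 4 in \<open>simp_all add: divide_neg_neg\<close>)
  qed
qed

lemma power_sum_order_comp_linear:
  fixes m :: "nat \<Rightarrow> nat" and K :: nat
  assumes "0 < K" and lin: "eventually (\<lambda>n. n \<le> K * m n \<and> m n \<le> n) at_top"
  shows "(\<lambda>n. power_sum_order a (m n)) \<in> \<Theta>(power_sum_order a)"
proof -
  have lin': "eventually (\<lambda>n. real n / K \<le> real (m n) \<and> real (m n) \<le> real n) at_top"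
    using lin
  proof eventually_elim
    case (elim n)
    then have "real n \<le> real K * real (m n)"
      by (metis of_nat_le_iff of_nat_mult)
    with elim assms(1) show ?case
      by (simp add: field_simps)
  qed
  consider "-1 < a" | "a = -1" | "a < -1"
    by linarith
  then show ?thesis
  proof cases
    case 1
    have "eventually (\<lambda>n. 1 / K powr (a + 1) * norm (power_sum_order a n)
        \<le> norm (power_sum_order a (m n))
        \<and> norm (power_sum_order a (m n)) \<le> 1 * norm (power_sum_order a n)) at_top"
      using lin'
    proof eventually_elim
      case (elim n)
      have "(real n / K) powr (a + 1) \<le> real (m n) powr (a + 1)"
           "real (m n) powr (a + 1) \<le> real n powr (a + 1)"
        using elim 1 by (auto intro: powr_mono2)
      with 1 show ?case
        by (simp add: power_sum_order_def powr_divide)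
    qed
    then show ?thesis
      by (rule bigthetaI'[rotated 2]) (use assms(1) in simp_all)
  next
    case 2
    have "eventually (\<lambda>n. 1 / 2 * norm (power_sum_order a n) \<le> norm (power_sum_order a (m n))
        \<and> norm (power_sum_order a (m n)) \<le> 1 * norm (power_sum_order a n)) at_top"
      using lin' eventually_ge_at_top[of "1::nat"] eventually_ln_ge[of "2 * ln K - 1"]
    proof eventually_elim
      case (elim n)
      then have "0 < real n / K"
        using assms(1) by simp
      then have "ln (real n / K) \<le> ln (real (m n))" "ln (real (m n)) \<le> ln (real n)"
        using elim by auto
      moreover have "ln (real n / K) = ln (real n) - ln K"
        using elim assms(1) by (simp add: ln_div)
      moreover have "0 \<le> ln (real n)"
        using elim by simp
      ultimately show ?case
        using elim 2 by (simp add: power_sum_order_def)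
    qed
    then show ?thesis
      by (rule bigthetaI'[rotated 2]) simp_all
  next
    case 3
    then show ?thesis
      by (intro bigthetaI_cong) (simp add: power_sum_order_def)
  qed
qed

lemma power_sum_comp_linear:
  fixes m :: "nat \<Rightarrow> nat" and K :: nat
  assumes "0 < K" and lin: "eventually (\<lambda>n. n \<le> K * m n \<and> m n \<le> n) at_top"
  shows "(\<lambda>n. power_sum a (m n)) \<in> \<Theta>(power_sum_order a)"
proof -
  have "filterlim m at_top at_top"
    unfolding filterlim_at_top
  proof
    fix Z
    show "eventually (\<lambda>n. Z \<le> m n) at_top"
      using lin eventually_ge_at_top[of "K * Z"]
      by eventually_elim (use assms(1) in \<open>auto dest: order_trans\<close>)
  qed
  then have "(\<lambda>n. power_sum a (m n)) \<in> \<Theta>(\<lambda>n. power_sum_order a (m n))"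
    by (rule landau_theta.compose[OF power_sum_bigtheta])
  also have "(\<lambda>n. power_sum_order a (m n)) \<in> \<Theta>(power_sum_order a)"
    by (rule power_sum_order_comp_linear[OF assms])
  finally show ?thesis .
qed

lemma power_sum_half_bigtheta:
  "(\<lambda>n. power_sum a (n div 2)) \<in> \<Theta>(power_sum_order a)"
  "(\<lambda>n. power_sum a ((n - 1) div 2)) \<in> \<Theta>(power_sum_order a)"
proof -
  have "eventually (\<lambda>n::nat. n \<le> 4 * (n div 2) \<and> n div 2 \<le> n) at_top"
    using eventually_ge_at_top[of "2::nat"] by eventually_elim presburger
  then show "(\<lambda>n. power_sum a (n div 2)) \<in> \<Theta>(power_sum_order a)"
    by (rule power_sum_comp_linear[rotated]) simp
  have "eventually (\<lambda>n::nat. n \<le> 4 * ((n - 1) div 2) \<and> (n - 1) div 2 \<le> n) at_top"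
    using eventually_ge_at_top[of "3::nat"] by eventually_elim presburger
  then show "(\<lambda>n. power_sum a ((n - 1) div 2)) \<in> \<Theta>(power_sum_order a)"
    by (rule power_sum_comp_linear[rotated]) simp
qed

section \<open>Splitting the sum\<close>

lemma S_sum_split:
  "S_sum r p q n =
     (\<Sum>k=1..n div 2. (real n powr r - real k powr r) powr p * real k powr q) +
     (\<Sum>j=1..(n - 1) div 2. (real n powr r - real (n - j) powr r) powr p * real (n - j) powr q)"
proof -
  define F where "F k = (real n powr r - real k powr r) powr p * real k powr q" for k
  have "{1..n - 1} = {1..n div 2} \<union> {n div 2 + 1..n - 1}"
    by auto
  then have "S_sum r p q n = (\<Sum>k=1..n div 2. F k) + (\<Sum>k=n div 2 + 1..n - 1. F k)"
    unfolding S_sum_def F_def by (simp add: sum.union_disjoint)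
  also have "(\<Sum>k=n div 2 + 1..n - 1. F k) = (\<Sum>j=1..(n - 1) div 2. F (n - j))"
    by (rule sum.reindex_bij_witness[of _ "\<lambda>j. n - j" "\<lambda>k. n - k"]) auto
  finally show ?thesis
    by (simp add: F_def)
qed

lemma one_minus_half_powr_pos: "0 < r \<Longrightarrow> 0 < 1 - (1 / 2 :: real) powr r"
  using powr_less_mono2[of r "1 / 2" 1] by simp

lemma head_term_bounds:
  fixes r p q :: real and n k :: nat
  assumes "0 < r" "1 \<le> k" "2 * k \<le> n"
  defines "c \<equiv> 1 - (1 / 2) powr r"
  shows "c powr \<bar>p\<bar> * (real n powr (r * p) * real k powr q)
           \<le> (real n powr r - real k powr r) powr p * real k powr q
       \<and> (real n powr r - real k powr r) powr p * real k powr q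
           \<le> c powr - \<bar>p\<bar> * (real n powr (r * p) * real k powr q)"
proof -
  have "real k powr r \<le> (real n / 2) powr r"
    using assms by (intro powr_mono2) auto
  then have "c * real n powr r \<le> real n powr r - real k powr r"
    by (simp add: c_def powr_divide algebra_simps)
  then have "c powr \<bar>p\<bar> * real n powr (r * p) \<le> (real n powr r - real k powr r) powr p
      \<and> (real n powr r - real k powr r) powr p \<le> c powr - \<bar>p\<bar> * real n powr (r * p)"
    using powr_bounds_of_ratio[of c "real n powr r" "real n powr r - real k powr r" p]
      one_minus_half_powr_pos[OF assms(1)] assms
    by (simp add: c_def powr_powr)
  then show ?thesis
    by (auto simp: mult.assoc[symmetric] intro: mult_right_mono)
qed

lemma tail_term_bounds:
  fixes r p q :: real and n j :: nat
  assumes "0 < r" "1 \<le> j" "2 * j \<le> n"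
  defines "e \<equiv> \<bar>(r - 1) * p\<bar> + \<bar>q\<bar>"
  shows "r powr p * (1 / 2) powr e * (real n powr ((r - 1) * p + q) * real j powr p)
           \<le> (real n powr r - real (n - j) powr r) powr p * real (n - j) powr q
       \<and> (real n powr r - real (n - j) powr r) powr p * real (n - j) powr q
           \<le> r powr p * (1 / 2) powr - e * (real n powr ((r - 1) * p + q) * real j powr p)"
proof -
  define N J K where "N = real n" and "J = real j" and "K = real (n - j)"
  have K: "K = N - J" "1 / 2 * N \<le> K" "0 < K" "K < N"
    using assms by (auto simp: N_def J_def K_def)
  obtain z where z: "K < z" "z < N" and "N powr r - K powr r = r * z powr (r - 1) * J"
    using powr_diff_mvt[OF K(3,4), of r] K(1) by auto
  then have diff: "(N powr r - K powr r) powr p = r powr p * J powr p * z powr ((r - 1) * p)"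
    using assms(1) K by (simp add: powr_mult powr_powr mult_ac)
  have "0 < N" using K by simp
  from powr_bounds_of_ratio[of "1 / 2" N z "(r - 1) * p"] powr_bounds_of_ratio[of "1 / 2" N K q]
  have z_pow: "(1 / 2) powr \<bar>(r - 1) * p\<bar> * N powr ((r - 1) * p) \<le> z powr ((r - 1) * p)"
      "z powr ((r - 1) * p) \<le> (1 / 2) powr - \<bar>(r - 1) * p\<bar> * N powr ((r - 1) * p)"
    and K_pow: "(1 / 2) powr \<bar>q\<bar> * N powr q \<le> K powr q"
      "K powr q \<le> (1 / 2) powr - \<bar>q\<bar> * N powr q"
    using K z \<open>0 < N\<close> by auto
  have lower: "(1 / 2) powr e * N powr ((r - 1) * p + q) \<le> z powr ((r - 1) * p) * K powr q"
    using mult_mono[OF z_pow(1) K_pow(1)] by (simp add: e_def powr_add mult_ac)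
  moreover have "(1 / 2 :: real) powr - e = (1 / 2) powr - \<bar>(r - 1) * p\<bar> * (1 / 2) powr - \<bar>q\<bar>"
    by (simp add: e_def powr_add[symmetric])
  then have upper: "z powr ((r - 1) * p) * K powr q \<le> (1 / 2) powr - e * N powr ((r - 1) * p + q)"
    using mult_mono[OF z_pow(2) K_pow(2)] by (simp add: powr_add mult_ac)
  have "0 \<le> r powr p * J powr p"
    by simp
  from mult_left_mono[OF lower this] mult_left_mono[OF upper this] show ?thesis
    unfolding N_def[symmetric] J_def[symmetric] K_def[symmetric] diff
    by (simp add: mult_ac)
qed

lemma head_sum_bigtheta:
  fixes r p q :: real
  assumes "0 < r"
  shows "(\<lambda>n. \<Sum>k=1..n div 2. (real n powr r - real k powr r) powr p * real k powr q)
           \<in> \<Theta>(\<lambda>n. real n powr (r * p) * power_sum q (n div 2))"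
proof -
  define c where "c = 1 - (1 / 2 :: real) powr r"
  have "0 < c"
    unfolding c_def by (rule one_minus_half_powr_pos[OF assms])
  then have "(\<lambda>n. \<Sum>k=1..n div 2. (real n powr r - real k powr r) powr p * real k powr q)
      \<in> \<Theta>(\<lambda>n. \<Sum>k=1..n div 2. real n powr (r * p) * real k powr q)"
    by (intro sum_bigtheta_termwise[of "c powr \<bar>p\<bar>" "c powr - \<bar>p\<bar>"] always_eventually)
       (use head_term_bounds[OF assms] in \<open>auto simp: c_def\<close>)
  then show ?thesis
    by (simp add: power_sum_def sum_distrib_left)
qed

lemma tail_sum_bigtheta:
  fixes r p q :: real
  assumes "0 < r"
  shows "(\<lambda>n. \<Sum>j=1..(n - 1) div 2.
             (real n powr r - real (n - j) powr r) powr p * real (n - j) powr q)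
           \<in> \<Theta>(\<lambda>n. real n powr ((r - 1) * p + q) * power_sum p ((n - 1) div 2))"
proof -
  define e where "e = \<bar>(r - 1) * p\<bar> + \<bar>q\<bar>"
  have "(\<lambda>n. \<Sum>j=1..(n - 1) div 2.
            (real n powr r - real (n - j) powr r) powr p * real (n - j) powr q)
      \<in> \<Theta>(\<lambda>n. \<Sum>j=1..(n - 1) div 2. real n powr ((r - 1) * p + q) * real j powr p)"
    by (intro sum_bigtheta_termwise[of "r powr p * (1 / 2) powr e" "r powr p * (1 / 2) powr - e"]
        always_eventually)
       (use assms tail_term_bounds[OF assms] in \<open>auto simp: e_def\<close>)
  then show ?thesis
    by (simp add: power_sum_def sum_distrib_left)
qed

section \<open>Comparing the two halves\<close>

(* The order of n^x * power_sum_order a n + n^y * power_sum_order b n when x + a = y + b. *)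
definition two_term_order :: "real \<Rightarrow> real \<Rightarrow> real \<Rightarrow> real \<Rightarrow> nat \<Rightarrow> real" where
  "two_term_order a b x y n =
     (if min a b > -1 then real n powr (x + a + 1)
      else if min a b = -1 then real n powr (x + a + 1) * (1 + ln (real n))
      else real n powr (max x y))"

lemma two_term_order_swap:
  "x + a = y + b \<Longrightarrow> two_term_order a b x y = two_term_order b a y x"
  unfolding two_term_order_def by (auto simp: min.commute max.commute add.commute add.left_commute)

lemma two_term_order_nonneg: "1 \<le> n \<Longrightarrow> 0 \<le> two_term_order a b x y n"
  by (simp add: two_term_order_def)

lemma power_times_order_le:
  fixes a b x y :: real and n :: nat
  assumes xy: "x + a = y + b" and n: "1 \<le> n"
  shows "real n powr x * power_sum_order a n \<le> (1 + 1 / \<bar>b + 1\<bar>) * two_term_order a b x y n"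
proof -
  define R where "R = two_term_order a b x y n"
  have le_K: "R \<le> (1 + 1 / \<bar>b + 1\<bar>) * R"
    using two_term_order_nonneg[OF n] by (simp add: R_def distrib_right)
  have to_max: "real n powr x \<le> real n powr max x y" "real n powr y \<le> real n powr max x y"
    using n by (auto intro: powr_mono)
  have ln: "0 \<le> ln (real n)"
    using n by simp
  have pow: "real n powr x * real n powr (a + 1) = real n powr (x + a + 1)"
    by (simp add: powr_add[symmetric] add.assoc)
  consider "-1 < a" "-1 < b" | "-1 < a" "b = -1" | "-1 < a" "b < -1"
    | "a = -1" "-1 \<le> b" | "a = -1" "b < -1" | "a < -1"
    by linarith
  then show ?thesis
  proof cases
    case 1
    then show ?thesis
      using le_K pow by (simp add: R_def power_sum_order_def two_term_order_def)
  next
    case 2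
    have "real n powr (x + a + 1) \<le> real n powr (x + a + 1) * (1 + ln (real n))"
      using ln by (simp add: mult_le_cancel_left1)
    with 2 le_K pow show ?thesis
      by (simp add: R_def power_sum_order_def two_term_order_def)
  next
    case 3
    have "real n powr (x + a + 1) \<le> real n powr y"
      using n 3 xy by (intro powr_mono) auto
    with 3 to_max le_K pow show ?thesis
      by (simp add: R_def power_sum_order_def two_term_order_def)
  next
    case 4
    then show ?thesis
      using le_K by (simp add: R_def power_sum_order_def two_term_order_def)
  next
    case 5
    define e where "e = - (b + 1)"
    have "0 < e" using 5 by (simp add: e_def)
    have "real n powr x * (1 + ln (real n)) \<le> real n powr x * ((1 + 1 / e) * real n powr e)"
      using one_plus_ln_le_powr[OF \<open>0 < e\<close>] n by (intro mult_left_mono) auto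
    also have "\<dots> = (1 + 1 / e) * real n powr y"
      using xy 5 by (simp add: e_def powr_add[symmetric] algebra_simps)
    also have "\<dots> \<le> (1 + 1 / e) * real n powr max x y"
      using to_max \<open>0 < e\<close> by (intro mult_left_mono) auto
    finally show ?thesis
      using 5 by (simp add: power_sum_order_def two_term_order_def e_def)
  next
    case 6
    then have "R = real n powr max x y"
      by (auto simp: R_def two_term_order_def)
    with 6 to_max le_K show ?thesis
      by (simp add: R_def power_sum_order_def)
  qed
qed

lemma two_term_order_le_sum:
  fixes a b x y :: real and n :: nat
  assumes xy: "x + a = y + b" and n: "1 \<le> n"
  shows "two_term_order a b x y n
           \<le> real n powr x * power_sum_order a n + real n powr y * power_sum_order b n"
proof -
  have G: "1 \<le> power_sum_order a n" "1 \<le> power_sum_order b n"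
    using power_sum_order_ge_one[OF n] by auto
  have x: "real n powr x \<le> real n powr x * power_sum_order a n"
    and y: "real n powr y \<le> real n powr y * power_sum_order b n"
    using G by (simp_all add: mult_le_cancel_left1)
  have nonneg: "0 \<le> real n powr x * power_sum_order a n" "0 \<le> real n powr y * power_sum_order b n"
    using G by (simp_all add: order_trans[OF zero_le_one])
  consider "-1 < a" "-1 < b" | "a = -1" "-1 \<le> b" | "b = -1" "-1 \<le> a" | "min a b < -1"
    by linarith
  then show ?thesis
  proof cases
    case 1
    then have "two_term_order a b x y n = real n powr x * power_sum_order a n"
      by (simp add: two_term_order_def power_sum_order_def powr_add add.assoc)
    with nonneg show ?thesis by simp
  next
    case 2
    then have "two_term_order a b x y n = real n powr x * power_sum_order a n"
      using power_sum_order_ge_one[OF n, of b] by (auto simp: two_term_order_def power_sum_order_def)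
    with nonneg show ?thesis by simp
  next
    case 3
    then have "two_term_order a b x y n = real n powr y * power_sum_order b n"
      using xy by (auto simp: two_term_order_def power_sum_order_def)
    with nonneg show ?thesis by simp
  next
    case 4
    have "mono (\<lambda>e. real n powr e)"
      using n by (auto intro!: monoI powr_mono)
    with 4 have "two_term_order a b x y n = max (real n powr x) (real n powr y)"
      by (auto simp: two_term_order_def max_of_mono)
    with x y nonneg show ?thesis by simp
  qed
qed

lemma power_times_order_bigo:
  fixes a b x y :: real
  assumes "x + a = y + b"
  shows "(\<lambda>n. real n powr x * power_sum_order a n) \<in> O(two_term_order a b x y)"
  using eventually_ge_at_top[of "1::nat"]
  by (intro bigoI[where c = "1 + 1 / \<bar>b + 1\<bar>"], eventually_elim)
     (use assms power_times_order_le power_sum_order_nonneg two_term_order_nonneg in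
      \<open>auto simp: abs_of_nonneg\<close>)

theorem two_term_bigtheta:
  fixes a b x y :: real
  assumes xy: "x + a = y + b"
  shows "(\<lambda>n. real n powr x * power_sum_order a n + real n powr y * power_sum_order b n)
           \<in> \<Theta>(two_term_order a b x y)"
proof
  have "(\<lambda>n. real n powr y * power_sum_order b n) \<in> O(two_term_order a b x y)"
    using power_times_order_bigo[of y b x a] xy two_term_order_swap[OF xy] by simp
  with power_times_order_bigo[OF xy]
  show "(\<lambda>n. real n powr x * power_sum_order a n + real n powr y * power_sum_order b n)
          \<in> O(two_term_order a b x y)"
    by (rule sum_in_bigo)
  show "(\<lambda>n. real n powr x * power_sum_order a n + real n powr y * power_sum_order b n)
          \<in> \<Omega>(two_term_order a b x y)"
    unfolding bigomega_iff_bigo using eventually_ge_at_top[of "1::nat"]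
    by (intro bigoI[where c = 1], eventually_elim)
       (use xy two_term_order_le_sum two_term_order_nonneg in
        \<open>auto simp: abs_of_nonneg power_sum_order_nonneg\<close>)
qed

lemma S_rate_two_term_order: "S_rate r p q = two_term_order q p (r * p) ((r - 1) * p + q)"
  by (auto simp: S_rate_def two_term_order_def min.commute)

theorem lemma5:
  fixes r p q :: real
  assumes "r > 0"
  shows "S_sum r p q \<in> \<Theta>(S_rate r p q)"
proof -
  have "S_sum r p q \<in> \<Theta>(\<lambda>n. real n powr (r * p) * power_sum q (n div 2)
      + real n powr ((r - 1) * p + q) * power_sum p ((n - 1) div 2))"
    unfolding S_sum_split[abs_def]
    by (intro bigtheta_add_nonneg head_sum_bigtheta tail_sum_bigtheta assms always_eventually)
       (auto intro: sum_nonneg simp: power_sum_nonneg)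
  also have "(\<lambda>n. real n powr (r * p) * power_sum q (n div 2)
      + real n powr ((r - 1) * p + q) * power_sum p ((n - 1) div 2))
    \<in> \<Theta>(\<lambda>n. real n powr (r * p) * power_sum_order q n
      + real n powr ((r - 1) * p + q) * power_sum_order p n)"
    by (intro bigtheta_add_nonneg landau_theta.mult_left power_sum_half_bigtheta
        eventually_mono[OF eventually_ge_at_top[of "1::nat"]])
       (auto simp: power_sum_nonneg power_sum_order_nonneg)
  also have "(\<lambda>n. real n powr (r * p) * power_sum_order q n
      + real n powr ((r - 1) * p + q) * power_sum_order p n) \<in> \<Theta>(S_rate r p q)"
    unfolding S_rate_two_term_order by (rule two_term_bigtheta) (simp add: algebra_simps)
  finally show ?thesis .
qed

end
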